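(* Let $\lambda$ be a strict partition with inner corner contents $x_0,\dots,x_m$ and outer corner contents $y_1,\dots,y_m$, let $0\le i\le m$, and let $\lambda^+=\lambda\cup\{\square\}$ be a strict partition obtained from $\lambda$ by adding one box $\square$ with $c_\square=x_i$. If $i=0$, then $$\frac{H_\lambda}{H_{\lambda^+}}=\frac{\prod_{1\le j\le m}\bigl(\binom{x_0}{2}-\binom{y_j}{2}\bigr)}{\prod_{1\le j\le m}\bigl(\binom{x_0}{2}-\binom{x_j}{2}\bigr)}.$$ If $1\le i\le m$, then $$\frac{H_\lambda}{H_{\lambda^+}}=\frac12\cdot\frac{\prod_{1\le j\le m}\bigl(\binom{x_i}{2}-\binom{y_j}{2}\bigr)}{\prod_{0\le j\le m,\ j\ne i}\bigl(\binom{x_i}{2}-\binom{x_j}{2}\bigr)}.$$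
   Context: A strict partition is a finite strictly decreasing sequence of positive integers $\lambda=(\lambda_1>\cdots>\lambda_\ell)$ (the empty sequence is allowed); $|\lambda|=\sum_i\lambda_i$, $\ell(\lambda)=\ell$, and $\lambda_i=0$ for $i>\ell(\lambda)$. The (shifted Young) diagram of $\lambda$ is the set of boxes $(i,j)$ with $1\le i\le\ell(\lambda)$, $i+1\le j\le i+\lambda_i$ (row $i$, column $j$); $\lambda$ is identified with its diagram. The content of $\square=(i,j)$ is $c_\square=j-i$. The hook length $h_\square$ of $\square=(i,j)\in\lambda$ is the number of boxes of $\lambda$ in row $i$ strictly to the right of $\square$, plus the number of boxes $(i',j)\in\lambda$ with $i'>i$, plus $1$, plus $\lambda_j$; $H_\lambda=\prod_{\square\in\lambda}h_\square$. Corners: an outer corner of $\lambda$ is a box of $\lambda$ whose removal leaves the diagram of a strict partition. Let $(\alpha_1,\beta_1),\dots,(\alpha_m,\beta_m)$ be the outer corners with $\alpha_1>\cdots>\alpha_m$, and $y_j=\beta_j-\alpha_j$ ($1\le j\le m$) their contents. Set $\alpha_{m+1}=0$, $\beta_0=\ell(\lambda)+1$, and $x_i=\beta_i-\alpha_{i+1}$ for $0\le i\le m$ (contents of the inner corners). One has $x_0=1\le y_1<x_1<y_2<\cdots<y_m<x_m$. *)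

theory Defs
  imports Complex_Main
begin

text \<open>A strict partition is represented by the list of its parts
  (lambda_1 > ... > lambda_l > 0).  Rows and columns are 1-indexed.\<close>

definition strict_partition :: "nat list \<Rightarrow> bool" where
  "strict_partition lam \<longleftrightarrow> sorted_wrt (>) lam \<and> (\<forall>x\<in>set lam. 0 < x)"

definition part :: "nat list \<Rightarrow> nat \<Rightarrow> nat" where
  "part lam i = (if 1 \<le> i \<and> i \<le> length lam then lam ! (i - 1) else 0)"

text \<open>Shifted Young diagram.\<close>
definition diagram :: "nat list \<Rightarrow> (nat \<times> nat) set" where
  "diagram lam = {(i, j). 1 \<le> i \<and> i \<le> length lam \<and> i + 1 \<le> j \<and> j \<le> i + part lam i}"

definition content :: "nat \<times> nat \<Rightarrow> int" where
  "content b = int (snd b) - int (fst b)"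

definition hook :: "nat list \<Rightarrow> nat \<times> nat \<Rightarrow> nat" where
  "hook lam b = (case b of (i, j) \<Rightarrow>
      card {j'. (i, j') \<in> diagram lam \<and> j' > j}
    + card {i'. (i', j) \<in> diagram lam \<and> i' > i} + 1 + part lam j)"

definition hook_product :: "nat list \<Rightarrow> nat" where
  "hook_product lam = (\<Prod>b\<in>diagram lam. hook lam b)"

definition outer_corners :: "nat list \<Rightarrow> (nat \<times> nat) set" where
  "outer_corners lam = {b \<in> diagram lam.
      \<exists>mu. strict_partition mu \<and> diagram mu = diagram lam - {b}}"

text \<open>Outer corners listed with decreasing row index alpha_1 > ... > alpha_m
  (each row contains at most one outer corner, its column is determined by the row).\<close>
definition corner_list :: "nat list \<Rightarrow> (nat \<times> nat) list" where
  "corner_list lam = map (\<lambda>r. (r, THE c. (r, c) \<in> outer_corners lam))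
      (rev (sorted_list_of_set (fst ` outer_corners lam)))"

definition ncorners :: "nat list \<Rightarrow> nat" where
  "ncorners lam = length (corner_list lam)"

definition alpha :: "nat list \<Rightarrow> nat \<Rightarrow> int" where
  "alpha lam j = (if 1 \<le> j \<and> j \<le> ncorners lam then int (fst (corner_list lam ! (j - 1))) else 0)"

definition beta :: "nat list \<Rightarrow> nat \<Rightarrow> int" where
  "beta lam j = (if j = 0 then int (length lam) + 1
                 else int (snd (corner_list lam ! (j - 1))))"

text \<open>Contents of outer corners y_j (1 <= j <= m) and inner corners x_i (0 <= i <= m).\<close>
definition ycont :: "nat list \<Rightarrow> nat \<Rightarrow> int" where
  "ycont lam j = beta lam j - alpha lam j"

definition xcont :: "nat list \<Rightarrow> nat \<Rightarrow> int" where
  "xcont lam i = beta lam i - alpha lam (i + 1)"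

end

theory Submission
  imports Defs
begin

text \<open>
  Appending a new shortest row of length \<open>a\<close> to a strict partition multiplies, for every
  old row \<open>i\<close>, the product of its hooks lying above the new row by \<open>(\<lambda>\<^sub>i + a) / (\<lambda>\<^sub>i - a)\<close>;
  the new row itself contributes \<open>a!\<close>. By induction on the number of rows,
  \<open>H\<^sub>\<lambda> = \<Prod>\<^sub>i \<lambda>\<^sub>i! \<Prod>\<^sub>i\<^sub><\<^sub>j (\<lambda>\<^sub>i + \<lambda>\<^sub>j) / (\<lambda>\<^sub>i - \<lambda>\<^sub>j)\<close>, which depends only on the set \<open>P\<close> of parts.

  Adding a box of content \<open>x = a + 1\<close> replaces the part \<open>a\<close> (a new part \<open>0\<close> if \<open>x = 1\<close>) by \<open>a + 1\<close>,
  so \<open>H\<^sub>\<lambda> / H\<^sub>\<lambda>\<^sub>+ = x\<^sup>-\<^sup>1 \<Prod>\<^sub>q g(q) / g(q + 1)\<close> over the parts \<open>q \<noteq> a\<close>, where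
  \<open>g(v) = C(x,2) - C(v,2)\<close>. The product telescopes: the surviving numerator factors are the parts
  \<open>q\<close> with \<open>q - 1 \<notin> P\<close>, i.e. the outer corner contents \<open>y\<^sub>j\<close>, and the surviving denominator factors
  are the \<open>q + 1 \<notin> P\<close> with \<open>q \<in> P \<union> {0}\<close>, i.e. the inner corner contents \<open>x\<^sub>j\<close>. For \<open>x \<noteq> 1\<close> the
  boundary factors \<open>g(a) = a\<close> and \<open>g(1) = a(a + 1)/2\<close> account for the factor \<open>1/2\<close>.
\<close>

section \<open>Shifted diagrams and strict partitions\<close>

lemma mem_diagram_iff: "(i, j) \<in> diagram lam \<longleftrightarrow> 1 \<le> i \<and> i + 1 \<le> j \<and> j \<le> i + part lam i"
  unfolding diagram_def part_def by auto

lemma mem_diagram_rowD: "(i, j) \<in> diagram lam \<Longrightarrow> 1 \<le> i \<and> i \<le> length lam"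
  unfolding diagram_def by auto

lemma part_eq_0: "length lam < i \<Longrightarrow> part lam i = 0"
  unfolding part_def by auto

lemma part_0 [simp]: "part lam 0 = 0"
  unfolding part_def by auto

lemma part_snoc: "part (lam @ [a]) i = (if i = Suc (length lam) then a else part lam i)"
  unfolding part_def by (auto simp: nth_append)

lemma row_of_diagram: "{j. (i, j) \<in> diagram lam} = (if 1 \<le> i then {i + 1..i + part lam i} else {})"
  by (auto simp: mem_diagram_iff)

lemma card_row_of_diagram: "card {j. (i, j) \<in> diagram lam} = part lam i"
  unfolding row_of_diagram by (auto simp: part_def)

lemma part_diagram_add_box:
  assumes "(r, c) \<notin> diagram lam" "diagram mu = diagram lam \<union> {(r, c)}"
  shows "part mu k = part lam k + (if k = r then 1 else 0)"
proof -
  have "{j. (k, j) \<in> diagram mu} = {j. (k, j) \<in> diagram lam} \<union> (if k = r then {c} else {})"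
    using assms(2) by auto
  moreover have "finite {j. (k, j) \<in> diagram lam}" unfolding row_of_diagram by auto
  moreover have "k = r \<Longrightarrow> c \<notin> {j. (k, j) \<in> diagram lam}" using assms(1) by auto
  ultimately have "card {j. (k, j) \<in> diagram mu} = card {j. (k, j) \<in> diagram lam} + (if k = r then 1 else 0)"
    by auto
  then show ?thesis unfolding card_row_of_diagram .
qed

lemma column_diagram_add_box:
  assumes "(r, c) \<notin> diagram lam" "diagram mu = diagram lam \<union> {(r, c)}"
  shows "1 \<le> r" "c = r + Suc (part lam r)"
proof -
  have "(r, c) \<in> diagram mu" using assms(2) by auto
  then have "1 \<le> r" "r + 1 \<le> c" "c \<le> r + Suc (part lam r)"
    by (auto simp: mem_diagram_iff part_diagram_add_box[OF assms])
  moreover have "\<not> (1 \<le> r \<and> r + 1 \<le> c \<and> c \<le> r + part lam r)" using assms(1) by (simp add: mem_diagram_iff)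
  ultimately show "1 \<le> r" "c = r + Suc (part lam r)" by auto
qed

lemma diagram_Sigma: "diagram lam = Sigma {1..length lam} (\<lambda>i. {i + 1..i + part lam i})"
  by (auto simp: mem_diagram_iff part_eq_0 intro: ccontr)

lemma finite_diagram [simp]: "finite (diagram lam)"
  unfolding diagram_Sigma by auto

lemma hook_eq: "hook lam (i, c) =
    card {j. 1 \<le> i \<and> i + 1 \<le> j \<and> j \<le> i + part lam i \<and> c < j}
  + card {k. 1 \<le> k \<and> k + 1 \<le> c \<and> c \<le> k + part lam k \<and> i < k} + 1 + part lam c"
  unfolding hook_def by (simp add: mem_diagram_iff)

lemma strict_partition_iff_part: "strict_partition lam \<longleftrightarrow>
    (\<forall>k. 1 \<le> k \<and> k \<le> length lam \<longrightarrow> 0 < part lam k) \<and>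
    (\<forall>k. 1 \<le> k \<and> k < length lam \<longrightarrow> part lam (Suc k) < part lam k)"
proof -
  have "transp ((>) :: nat \<Rightarrow> nat \<Rightarrow> bool)" by (auto simp: transp_def)
  then have "strict_partition lam \<longleftrightarrow>
      (\<forall>i. Suc i < length lam \<longrightarrow> lam ! Suc i < lam ! i) \<and> (\<forall>i < length lam. 0 < lam ! i)"
    unfolding strict_partition_def by (simp add: sorted_wrt_iff_nth_Suc_transp all_set_conv_all_nth)
  also have "(\<forall>i. Suc i < length lam \<longrightarrow> lam ! Suc i < lam ! i) \<longleftrightarrow>
      (\<forall>k. 1 \<le> k \<and> k < length lam \<longrightarrow> part lam (Suc k) < part lam k)"
  proof (intro iffI allI impI)
    fix k assume "\<forall>i. Suc i < length lam \<longrightarrow> lam ! Suc i < lam ! i" "1 \<le> k \<and> k < length lam"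
    then show "part lam (Suc k) < part lam k" by (auto simp: part_def elim: allE[of _ "k - 1"])
  next
    fix i assume "\<forall>k. 1 \<le> k \<and> k < length lam \<longrightarrow> part lam (Suc k) < part lam k" "Suc i < length lam"
    then show "lam ! Suc i < lam ! i" by (auto simp: part_def elim: allE[of _ "Suc i"])
  qed
  also have "(\<forall>i < length lam. 0 < lam ! i) \<longleftrightarrow> (\<forall>k. 1 \<le> k \<and> k \<le> length lam \<longrightarrow> 0 < part lam k)"
  proof (intro iffI allI impI)
    fix i assume "\<forall>k. 1 \<le> k \<and> k \<le> length lam \<longrightarrow> 0 < part lam k" "i < length lam"
    then show "0 < lam ! i" by (auto simp: part_def elim: allE[of _ "Suc i"])
  qed (auto simp: part_def)
  finally show ?thesis by blast
qed

lemma strict_partition_snocD: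
  assumes "strict_partition (lam @ [a])"
  shows "strict_partition lam" "0 < a" "\<forall>q\<in>set lam. a < q"
  using assms unfolding strict_partition_def by (auto simp: sorted_wrt_append)

context
  fixes lam assumes strict: "strict_partition lam"
begin

lemma strict_part_pos: "1 \<le> i \<Longrightarrow> i \<le> length lam \<Longrightarrow> 0 < part lam i"
  using strict unfolding strict_partition_def part_def by auto

lemma strict_part_less: "1 \<le> i \<Longrightarrow> i < j \<Longrightarrow> j \<le> length lam \<Longrightarrow> part lam j < part lam i"
  using strict sorted_wrt_nth_less[of "(>)" lam "i - 1" "j - 1"]
  unfolding strict_partition_def part_def by auto

lemma strict_part_gap:
  assumes "1 \<le> i" "i \<le> j" "j \<le> length lam + 1"
  shows "part lam j + (j - i) \<le> part lam i"
  using assms(2,3)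
proof (induction j rule: dec_induct)
  case (step j)
  have "part lam (Suc j) < part lam j"
  proof (cases "Suc j \<le> length lam")
    case True
    then show ?thesis using strict_part_less[of j "Suc j"] step assms(1) by auto
  next
    case False
    then show ?thesis using strict_part_pos[of j] part_eq_0[of lam "Suc j"] step assms(1) by auto
  qed
  then show ?case using step by auto
qed simp

lemma strict_part_antimono: "1 \<le> i \<Longrightarrow> i \<le> j \<Longrightarrow> j \<le> length lam + 1 \<Longrightarrow> part lam j \<le> part lam i"
  using strict_part_gap by fastforce

lemma strict_part_inj:
  assumes "part lam i = part lam j" "0 < part lam i"
  shows "i = j"
proof -
  have "i \<le> length lam" "j \<le> length lam" "i \<noteq> 0" "j \<noteq> 0"
    using assms part_eq_0[of lam i] part_eq_0[of lam j] by (auto intro: ccontr)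
  then show ?thesis
    using strict_part_less[of i j] strict_part_less[of j i] assms by (cases i j rule: linorder_cases) auto
qed

lemma strict_set_eq_parts: "set lam = part lam ` {1..length lam}"
proof
  show "set lam \<subseteq> part lam ` {1..length lam}"
  proof
    fix x assume "x \<in> set lam"
    then obtain k where k: "k < length lam" "x = lam ! k" by (auto simp: in_set_conv_nth)
    then have "x = part lam (Suc k)" by (simp add: part_def)
    then show "x \<in> part lam ` {1..length lam}" using k by (intro image_eqI[of _ _ "Suc k"]) auto
  qed
qed (auto simp: part_def)

lemma strict_mem_set_iff_part: "v \<in> set lam \<longleftrightarrow> 0 < v \<and> (\<exists>k. part lam k = v)"
proof
  assume "0 < v \<and> (\<exists>k. part lam k = v)"
  then obtain k where k: "part lam k = v" "0 < v" by auto
  then have "1 \<le> k" "k \<le> length lam" using part_eq_0[of lam k] by (auto intro: ccontr simp: not_less_eq_eq)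
  then show "v \<in> set lam" unfolding strict_set_eq_parts using k by auto
qed (use strict_part_pos in \<open>auto simp: strict_set_eq_parts\<close>)

lemma inj_on_part: "inj_on (part lam) {1..length lam}"
  using strict_part_inj strict_part_pos by (auto simp: inj_on_def)

lemma prod_parts: "(\<Prod>i\<in>{1..length lam}. f (part lam i)) = (\<Prod>q\<in>set lam. f q)"
  unfolding strict_set_eq_parts using inj_on_part by (simp add: prod.reindex)

end

section \<open>The hook product formula\<close>

lemma diagram_snoc:
  "diagram (lam @ [a]) = diagram lam \<union> Pair (Suc (length lam)) ` {length lam + 2..length lam + 1 + a}"
proof (intro set_eqI)
  fix x :: "nat \<times> nat"
  obtain i c where "x = (i, c)" by force
  then show "x \<in> diagram (lam @ [a]) \<longleftrightarrow> x \<in> diagram lam \<union> Pair (Suc (length lam)) ` {length lam + 2..length lam + 1 + a}"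
    by (cases "i = Suc (length lam)") (auto simp: mem_diagram_iff part_snoc part_eq_0)
qed

lemma hook_snoc_new_row:
  assumes "c \<in> {length lam + 2..length lam + 1 + a}"
  shows "hook (lam @ [a]) (Suc (length lam), c) = length lam + 2 + a - c"
proof -
  have "{j. 1 \<le> Suc (length lam) \<and> Suc (length lam) + 1 \<le> j \<and> j \<le> Suc (length lam) + part (lam @ [a]) (Suc (length lam)) \<and> c < j}
      = {c + 1..length lam + 1 + a}"
    using assms by (auto simp: part_snoc)
  moreover have "{k. 1 \<le> k \<and> k + 1 \<le> c \<and> c \<le> k + part (lam @ [a]) k \<and> Suc (length lam) < k} = {}"
    by (auto simp: part_snoc part_eq_0)
  moreover have "part (lam @ [a]) c = 0" using assms by (auto simp: part_eq_0)
  ultimately show ?thesis using assms unfolding hook_eq by (simp only: card.empty) (simp add: Suc_diff_le)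
qed

lemma prod_hook_snoc_new_row:
  "(\<Prod>c\<in>{length lam + 2..length lam + 1 + a}. hook (lam @ [a]) (Suc (length lam), c)) = fact a"
proof -
  have "(\<Prod>c\<in>{length lam + 2..length lam + 1 + a}. hook (lam @ [a]) (Suc (length lam), c))
      = (\<Prod>c\<in>{length lam + 2..length lam + 1 + a}. length lam + 2 + a - c)"
    by (rule prod.cong[OF refl]) (rule hook_snoc_new_row)
  also have "\<dots> = (\<Prod>k\<in>{1..a}. k)"
    by (rule prod.reindex_bij_witness[where i="\<lambda>k. length lam + 2 + a - k" and j="\<lambda>c. length lam + 2 + a - c"]) auto
  finally show ?thesis by (simp add: fact_prod)
qed

lemma hook_snoc_old_row:
  assumes "(i, c) \<in> diagram lam"
  shows "hook (lam @ [a]) (i, c) = hook lam (i, c)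
    + (if length lam + 2 \<le> c \<and> c \<le> length lam + 1 + a then 1 else 0)
    + (if c = Suc (length lam) then a else 0)"
proof -
  define n where "n = Suc (length lam)"
  have i: "1 \<le> i" "i \<le> length lam" using mem_diagram_rowD[OF assms] by auto
  define leg where "leg = {k. 1 \<le> k \<and> k + 1 \<le> c \<and> c \<le> k + part lam k \<and> i < k}"
  have "{k. 1 \<le> k \<and> k + 1 \<le> c \<and> c \<le> k + part (lam @ [a]) k \<and> i < k}
      = leg \<union> (if n + 1 \<le> c \<and> c \<le> n + a then {n} else {})"
    using i by (auto simp: leg_def part_snoc n_def part_eq_0)
  moreover have "finite leg" unfolding leg_def by (rule finite_subset[of _ "{..c}"]) auto
  moreover have "n \<notin> leg" by (auto simp: leg_def n_def part_eq_0)
  ultimately have "card {k. 1 \<le> k \<and> k + 1 \<le> c \<and> c \<le> k + part (lam @ [a]) k \<and> i < k}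
      = card leg + (if n + 1 \<le> c \<and> c \<le> n + a then 1 else 0)"
    by auto
  moreover have "part (lam @ [a]) i = part lam i" using i by (simp add: part_snoc)
  moreover have "part (lam @ [a]) c = part lam c + (if c = n then a else 0)"
    by (simp add: part_snoc n_def part_eq_0)
  ultimately show ?thesis unfolding hook_eq leg_def n_def by simp
qed

lemma prod_descending_shift:
  "k \<le> v \<Longrightarrow> (\<Prod>t\<in>{1..k}. v - t + 1) * (v - k) = (\<Prod>t\<in>{0..k}. (v::nat) - t)"
proof (induction k)
  case (Suc k)
  have "(\<Prod>t\<in>{1..Suc k}. v - t + 1) * (v - Suc k) = ((\<Prod>t\<in>{1..k}. v - t + 1) * (v - k)) * (v - Suc k)"
    using Suc.prems by (simp add: Suc_diff_Suc)
  also have "\<dots> = (\<Prod>t\<in>{0..Suc k}. v - t)" using Suc by simp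
  finally show ?case .
qed simp

lemma prod_descending_bump:
  assumes "a \<le> v"
  shows "(\<Prod>t\<in>{0..a}. v - t + (if t = 0 then a else 1)) * (v - a) = (\<Prod>t\<in>{0..a}. (v::nat) - t) * (v + a)"
proof -
  have "(\<Prod>t\<in>{0..a}. v - t + (if t = 0 then a else 1)) = (v + a) * (\<Prod>t\<in>{Suc 0..a}. v - t + (if t = 0 then a else 1))"
    by (simp add: prod.atLeast_Suc_atMost)
  also have "(\<Prod>t\<in>{Suc 0..a}. v - t + (if t = 0 then a else 1)) = (\<Prod>t\<in>{1..a}. v - t + 1)"
    by (rule prod.cong) auto
  finally show ?thesis using prod_descending_shift[OF assms] by (simp add: mult_ac)
qed

context
  fixes lam :: "nat list" and a :: nat
  assumes strict: "strict_partition (lam @ [a])"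
begin

lemma part_ge_snoc: "1 \<le> i \<Longrightarrow> i \<le> length lam \<Longrightarrow> a + (Suc (length lam) - i) \<le> part lam i"
  using strict_part_gap[OF strict, of i "Suc (length lam)"] by (simp add: part_snoc)

lemma hook_below_snoc:
  assumes "1 \<le> i" "i \<le> length lam" "Suc (length lam) \<le> c" "c \<le> Suc (length lam) + a"
  shows "hook lam (i, c) = part lam i + Suc (length lam) - c"
proof -
  have "{j. 1 \<le> i \<and> i + 1 \<le> j \<and> j \<le> i + part lam i \<and> c < j} = {c + 1..i + part lam i}"
    using assms by auto
  moreover have "{k. 1 \<le> k \<and> k + 1 \<le> c \<and> c \<le> k + part lam k \<and> i < k} = {i + 1..length lam}"
  proof (intro set_eqI iffI)
    fix k assume "k \<in> {k. 1 \<le> k \<and> k + 1 \<le> c \<and> c \<le> k + part lam k \<and> i < k}"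
    then show "k \<in> {i + 1..length lam}" using part_eq_0[of lam k] by (cases "k \<le> length lam") auto
  next
    fix k assume "k \<in> {i + 1..length lam}"
    then show "k \<in> {k. 1 \<le> k \<and> k + 1 \<le> c \<and> c \<le> k + part lam k \<and> i < k}"
      using part_ge_snoc[of k] assms by auto
  qed
  moreover have "part lam c = 0" using assms by (auto simp: part_eq_0)
  ultimately show ?thesis using assms part_ge_snoc[of i] by (simp add: hook_eq)
qed

text \<open>Over the new row, the hooks of row \<open>i\<close> are \<open>v, v - 1, \<dots>, v - a\<close> with \<open>v = \<lambda>\<^sub>i\<close>;
  the new row turns them into \<open>v + a, v, \<dots>, v - a + 1\<close>.\<close>

lemma prod_hook_row_block_snoc:
  assumes i: "1 \<le> i" "i \<le> length lam"
  shows "(\<Prod>c\<in>{Suc (length lam)..Suc (length lam) + a}. hook (lam @ [a]) (i, c)) * (part lam i - a)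
       = (\<Prod>c\<in>{Suc (length lam)..Suc (length lam) + a}. hook lam (i, c)) * (part lam i + a)"
proof -
  define n where "n = Suc (length lam)"
  define v where "v = part lam i"
  have v: "a + (n - i) \<le> v" using part_ge_snoc[OF i] unfolding n_def v_def .
  have "(\<Prod>c\<in>{n..n + a}. hook (lam @ [a]) (i, c)) = (\<Prod>c\<in>{n..n + a}. v + n - c + (if c = n then a else 1))"
  proof (rule prod.cong[OF refl])
    fix c assume c: "c \<in> {n..n + a}"
    then have "(i, c) \<in> diagram lam" using i v by (auto simp: mem_diagram_iff v_def n_def)
    then show "hook (lam @ [a]) (i, c) = v + n - c + (if c = n then a else 1)"
      using hook_snoc_old_row hook_below_snoc[OF i] c by (auto simp: n_def v_def)
  qed
  also have "\<dots> = (\<Prod>t\<in>{0..a}. v - t + (if t = 0 then a else 1))"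
    using prod.shift_bounds_cl_nat_ivl[of "\<lambda>c. v + n - c + (if c = n then a else 1)" 0 n a]
    by (simp add: add.commute)
  finally have new: "(\<Prod>c\<in>{n..n + a}. hook (lam @ [a]) (i, c)) = (\<Prod>t\<in>{0..a}. v - t + (if t = 0 then a else 1))" .
  have "(\<Prod>c\<in>{n..n + a}. hook lam (i, c)) = (\<Prod>c\<in>{n..n + a}. v + n - c)"
    by (rule prod.cong[OF refl]) (use hook_below_snoc[OF i] in \<open>auto simp: n_def v_def\<close>)
  also have "\<dots> = (\<Prod>t\<in>{0..a}. v - t)"
    using prod.shift_bounds_cl_nat_ivl[of "\<lambda>c. v + n - c" 0 n a] by (simp add: add.commute)
  finally have old: "(\<Prod>c\<in>{n..n + a}. hook lam (i, c)) = (\<Prod>t\<in>{0..a}. v - t)" .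
  show ?thesis using prod_descending_bump[of a v] v unfolding n_def[symmetric] v_def[symmetric] new old by simp
qed

lemma prod_hook_block_snoc:
  defines "B \<equiv> {1..length lam} \<times> {Suc (length lam)..Suc (length lam) + a}"
  shows "(\<Prod>b\<in>B. hook (lam @ [a]) b) * (\<Prod>i\<in>{1..length lam}. part lam i - a)
       = (\<Prod>b\<in>B. hook lam b) * (\<Prod>i\<in>{1..length lam}. part lam i + a)"
proof -
  have rows: "prod f B = (\<Prod>i\<in>{1..length lam}. \<Prod>c\<in>{Suc (length lam)..Suc (length lam) + a}. f (i, c))"
    for f :: "_ \<Rightarrow> nat"
    unfolding B_def by (simp only: prod.cartesian_product case_prod_eta)
  show ?thesis
    unfolding rows prod.distrib[symmetric]
    by (intro prod.cong[OF refl]) (use prod_hook_row_block_snoc in auto)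
qed

lemma hook_product_snoc:
  "hook_product (lam @ [a]) * (\<Prod>i\<in>{1..length lam}. part lam i - a)
     = hook_product lam * fact a * (\<Prod>i\<in>{1..length lam}. part lam i + a)"
proof -
  define D where "D = diagram lam"
  define R where "R = Pair (Suc (length lam)) ` {length lam + 2..length lam + 1 + a}"
  define B where "B = {1..length lam} \<times> {Suc (length lam)..Suc (length lam) + a}"
  have B: "B \<subseteq> D"
    using part_ge_snoc by (fastforce simp: B_def D_def mem_diagram_iff)
  have "D \<inter> R = {}" by (auto simp: D_def R_def mem_diagram_iff part_eq_0)
  then have "hook_product (lam @ [a]) = (\<Prod>b\<in>D. hook (lam @ [a]) b) * (\<Prod>b\<in>R. hook (lam @ [a]) b)"
    unfolding hook_product_def diagram_snoc D_def[symmetric] R_def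
    by (intro prod.union_disjoint) (auto simp: D_def)
  also have "(\<Prod>b\<in>R. hook (lam @ [a]) b) = fact a"
    unfolding R_def by (subst prod.reindex) (simp add: inj_on_def, simp only: comp_def prod_hook_snoc_new_row)
  also have "(\<Prod>b\<in>D. hook (lam @ [a]) b) = (\<Prod>b\<in>D - B. hook lam b) * (\<Prod>b\<in>B. hook (lam @ [a]) b)"
  proof -
    have "(\<Prod>b\<in>D - B. hook (lam @ [a]) b) = (\<Prod>b\<in>D - B. hook lam b)"
    proof (rule prod.cong[OF refl])
      fix b assume b: "b \<in> D - B"
      then obtain i c where "b = (i, c)" "i \<le> length lam" "(i, c) \<in> diagram lam"
        by (cases b) (auto simp: D_def dest: mem_diagram_rowD)
      then show "hook (lam @ [a]) b = hook lam b"
        using b by (auto simp: B_def hook_snoc_old_row mem_diagram_iff)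
    qed
    then show ?thesis using prod.subset_diff[OF B, of "hook (lam @ [a])"] by (simp add: D_def)
  qed
  finally have "hook_product (lam @ [a]) = (\<Prod>b\<in>D - B. hook lam b) * (\<Prod>b\<in>B. hook (lam @ [a]) b) * fact a" .
  moreover have "hook_product lam = (\<Prod>b\<in>D - B. hook lam b) * (\<Prod>b\<in>B. hook lam b)"
    unfolding hook_product_def D_def[symmetric] using prod.subset_diff[OF B] by (simp add: D_def)
  ultimately show ?thesis using prod_hook_block_snoc unfolding B_def by (simp add: mult_ac)
qed

end

definition hook_formula :: "nat set \<Rightarrow> real" where
  "hook_formula S = (\<Prod>p\<in>S. fact p * (\<Prod>q\<in>{q\<in>S. q < p}. (real p + real q) / (real p - real q)))"

lemma hook_formula_pos: "finite S \<Longrightarrow> 0 < hook_formula S"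
  unfolding hook_formula_def by (intro prod_pos mult_pos_pos divide_pos_pos) auto

lemma prod_pairs_less_insert:
  fixes f :: "'b::linorder \<Rightarrow> 'b \<Rightarrow> 'a::comm_monoid_mult"
  assumes "finite S" "a \<notin> S"
  shows "(\<Prod>p\<in>insert a S. \<Prod>q\<in>{q\<in>insert a S. q < p}. f p q)
       = (\<Prod>q\<in>S. if q < a then f a q else f q a) * (\<Prod>p\<in>S. \<Prod>q\<in>{q\<in>S. q < p}. f p q)"
proof -
  have "{q\<in>insert a S. q < p} = (if a < p then insert a {q\<in>S. q < p} else {q\<in>S. q < p})" for p
    by auto
  then have lower: "(\<Prod>q\<in>{q\<in>insert a S. q < p}. f p q) = (if a < p then f p a else 1) * (\<Prod>q\<in>{q\<in>S. q < p}. f p q)" for p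
    using assms by simp
  have "(\<Prod>p\<in>insert a S. \<Prod>q\<in>{q\<in>insert a S. q < p}. f p q)
      = (\<Prod>q\<in>{q\<in>insert a S. q < a}. f a q) * (\<Prod>p\<in>S. \<Prod>q\<in>{q\<in>insert a S. q < p}. f p q)"
    using assms by (rule prod.insert)
  also have "\<dots> = (\<Prod>q\<in>{q\<in>S. q < a}. f a q) * (\<Prod>p\<in>S. (if a < p then f p a else 1) * (\<Prod>q\<in>{q\<in>S. q < p}. f p q))"
    by (simp only: lower) simp
  also have "\<dots> = ((\<Prod>q\<in>{q\<in>S. q < a}. f a q) * (\<Prod>p\<in>{p\<in>S. a < p}. f p a)) * (\<Prod>p\<in>S. \<Prod>q\<in>{q\<in>S. q < p}. f p q)"
    using assms(1) by (simp add: prod.distrib prod.inter_filter mult_ac)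
  also have "{p\<in>S. a < p} = {q\<in>S. \<not> q < a}" using assms(2) by (auto simp: not_less order.order_iff_strict)
  finally show ?thesis using assms(1) by (simp add: prod.If_cases Int_def)
qed

lemma hook_formula_insert:
  assumes "finite S" "a \<notin> S"
  shows "hook_formula (insert a S)
    = fact a * (\<Prod>q\<in>S. (real a + real q) / \<bar>real a - real q\<bar>) * hook_formula S"
proof -
  define h where "h p q = (real p + real q) / (real p - real q)" for p q
  have split: "hook_formula T = (\<Prod>p\<in>T. fact p) * (\<Prod>p\<in>T. \<Prod>q\<in>{q\<in>T. q < p}. h p q)" for T
    unfolding hook_formula_def prod.distrib h_def ..
  have "hook_formula (insert a S)
      = fact a * prod fact S * ((\<Prod>q\<in>S. if q < a then h a q else h q a) * (\<Prod>p\<in>S. \<Prod>q\<in>{q\<in>S. q < p}. h p q))"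
    unfolding split[of "insert a S"] by (simp only: prod_pairs_less_insert[OF assms] prod.insert[OF assms])
  also have "(\<Prod>q\<in>S. if q < a then h a q else h q a) = (\<Prod>q\<in>S. (real a + real q) / \<bar>real a - real q\<bar>)"
    by (rule prod.cong[OF refl]) (use assms in \<open>auto simp: h_def abs_if add.commute\<close>)
  finally show ?thesis unfolding split[of S] by (simp add: mult_ac)
qed

lemma hook_formula_insert_0: "finite S \<Longrightarrow> 0 \<notin> S \<Longrightarrow> hook_formula (insert 0 S) = hook_formula S"
  by (simp add: hook_formula_insert prod.neutral)

theorem hook_product_eq_hook_formula:
  "strict_partition lam \<Longrightarrow> real (hook_product lam) = hook_formula (set lam)"
proof (induction lam rule: rev_induct)
  case Nil
  then show ?case by (simp add: hook_product_def hook_formula_def diagram_Sigma)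
next
  case (snoc a lam)
  have strict: "strict_partition lam" and less: "\<forall>q\<in>set lam. a < q"
    using strict_partition_snocD[OF snoc.prems] by auto
  define N where "N = (\<Prod>q\<in>set lam. real q - real a)"
  define M where "M = (\<Prod>q\<in>set lam. real q + real a)"
  have "real (hook_product (lam @ [a])) * N = real (hook_product lam) * fact a * M"
  proof -
    have "(\<Prod>i\<in>{1..length lam}. real (part lam i - a)) = (\<Prod>i\<in>{1..length lam}. real (part lam i) - real a)"
      using less strict_set_eq_parts[OF strict] by (intro prod.cong[OF refl] of_nat_diff) (auto intro: less_imp_le)
    then show ?thesis
      using arg_cong[OF hook_product_snoc[OF snoc.prems], of real]
        prod_parts[OF strict, of "\<lambda>q. real q - real a"] prod_parts[OF strict, of "\<lambda>q. real q + real a"]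
      by (simp add: of_nat_prod N_def M_def)
  qed
  moreover have "N \<noteq> 0" using less by (auto simp: N_def prod_zero_iff)
  ultimately have "real (hook_product (lam @ [a])) = fact a * (M / N) * hook_formula (set lam)"
    using snoc.IH[OF strict] by (simp add: field_simps)
  also have "M / N = (\<Prod>q\<in>set lam. (real a + real q) / \<bar>real a - real q\<bar>)"
    unfolding M_def N_def prod_dividef[symmetric]
    by (rule prod.cong[OF refl]) (use less in \<open>auto simp: abs_if add.commute\<close>)
  also have "fact a * (\<Prod>q\<in>set lam. (real a + real q) / \<bar>real a - real q\<bar>) * hook_formula (set lam)
      = hook_formula (set (lam @ [a]))"
    using hook_formula_insert[of "set lam" a] less by auto
  finally show ?case .
qed

section \<open>Adding a box\<close>

context
  fixes lam lamp :: "nat list" and r :: nat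
  assumes strict: "strict_partition lam" and strict': "strict_partition lamp"
    and part_add_box: "\<And>k. part lamp k = part lam k + (if k = r then 1 else 0)"
begin

lemma Suc_part_add_box_notin: "Suc (part lam r) \<notin> set lam"
proof
  assume "Suc (part lam r) \<in> set lam"
  then obtain k where k: "part lam k = Suc (part lam r)" using strict_mem_set_iff_part[OF strict] by auto
  then have "k \<noteq> r" by auto
  then have "part lamp k = part lamp r" using k by (simp add: part_add_box)
  then show False using strict_part_inj[OF strict', of k r] \<open>k \<noteq> r\<close> by (simp add: part_add_box)
qed

lemma set_add_box: "set lamp = insert (Suc (part lam r)) (set lam - {part lam r})"
proof (rule set_eqI, rule iffI)
  fix v assume "v \<in> set lamp"
  then obtain k where k: "part lamp k = v" "0 < v" using strict_mem_set_iff_part[OF strict'] by auto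
  show "v \<in> insert (Suc (part lam r)) (set lam - {part lam r})"
  proof (cases "k = r")
    case True
    then show ?thesis using k by (simp add: part_add_box)
  next
    case False
    then have k': "part lam k = v" using k by (simp add: part_add_box)
    then have "v \<noteq> part lam r" using strict_part_inj[OF strict, of k r] False k by auto
    then show ?thesis using strict_mem_set_iff_part[OF strict] k k' by auto
  qed
next
  fix v assume v: "v \<in> insert (Suc (part lam r)) (set lam - {part lam r})"
  show "v \<in> set lamp"
  proof (cases "v = Suc (part lam r)")
    case True
    then show ?thesis using strict_mem_set_iff_part[OF strict'] part_add_box[of r] by auto
  next
    case False
    then obtain k where k: "part lam k = v" "0 < v" "v \<noteq> part lam r"
      using v strict_mem_set_iff_part[OF strict] by auto
    then have "part lamp k = v" by (auto simp: part_add_box)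
    then show ?thesis using k strict_mem_set_iff_part[OF strict'] by auto
  qed
qed

end

lemma add_box:
  assumes "strict_partition lam" "strict_partition lamp"
    and "b \<notin> diagram lam" "diagram lamp = diagram lam \<union> {b}"
  obtains a where "content b = int (Suc a)" "a = 0 \<or> a \<in> set lam" "Suc a \<notin> set lam"
    and "set lamp = insert (Suc a) (set lam - {a})"
proof -
  obtain r c where b: "b = (r, c)" by force
  note part_lamp = part_diagram_add_box[of r c lam lamp, folded b, OF assms(3,4)]
  have "part lam r = 0 \<or> part lam r \<in> set lam"
    using strict_mem_set_iff_part[OF assms(1)] by auto
  moreover have "content b = int (Suc (part lam r))"
    using column_diagram_add_box[of r c lam lamp, folded b, OF assms(3,4)] by (simp add: b content_def)
  ultimately show thesis
    using that Suc_part_add_box_notin[OF assms(1,2) part_lamp] set_add_box[OF assms(1,2) part_lamp] by blast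
qed

section \<open>Telescoping the hook formula\<close>

lemma prod_Diff_Suc_image_remove:
  fixes g :: "nat \<Rightarrow> 'a::comm_monoid_mult"
  assumes "finite P" "a \<in> P" "Suc a \<notin> P"
  defines "Q \<equiv> P - {a}"
  shows "prod g (Q - Suc ` Q) * (g a * prod g (Suc ` P - P - {Suc a}))
       = prod g (P - Suc ` P) * prod g (Suc ` Q - Q)"
proof -
  have SQ: "Suc ` Q = Suc ` P - {Suc a}" unfolding Q_def by auto
  have fin: "finite (Suc ` P - P - {Suc a})" using assms(1) by simp
  show ?thesis
  proof (cases "a \<in> Suc ` P")
    case True
    have "Q - Suc ` Q = P - Suc ` P" using assms(2,3) True unfolding SQ unfolding Q_def by auto
    moreover have "Suc ` Q - Q = insert a (Suc ` P - P - {Suc a})" using assms(2,3) True unfolding SQ unfolding Q_def by auto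
    moreover have "a \<notin> Suc ` P - P - {Suc a}" using assms(2) by auto
    ultimately show ?thesis using fin by (simp add: mult_ac)
  next
    case False
    have "Q - Suc ` Q = P - Suc ` P - {a}" using assms(2,3) False unfolding SQ unfolding Q_def by auto
    moreover have "Suc ` Q - Q = Suc ` P - P - {Suc a}" using assms(2,3) False unfolding SQ unfolding Q_def by auto
    moreover have "a \<in> P - Suc ` P" using assms(2) False by auto
    ultimately show ?thesis using assms(1) by (simp add: prod.remove mult_ac)
  qed
qed

lemma prod_telescope:
  fixes g :: "nat \<Rightarrow> 'a::field"
  assumes "finite A" "\<forall>q\<in>A \<union> Suc ` A. g q \<noteq> 0"
  shows "(\<Prod>q\<in>A. g q / g (Suc q)) = prod g (A - Suc ` A) / prod g (Suc ` A - A)"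
proof -
  have "prod g A = prod g (A - Suc ` A) * prod g (A \<inter> Suc ` A)"
    using prod.subset_diff[of "A \<inter> Suc ` A" A g] assms(1) by (simp add: Diff_Int)
  moreover have "(\<Prod>q\<in>A. g (Suc q)) = prod g (Suc ` A - A) * prod g (A \<inter> Suc ` A)"
    using prod.subset_diff[of "A \<inter> Suc ` A" "Suc ` A" g] assms(1)
    by (simp add: prod.reindex Diff_Int Int_commute)
  moreover have "prod g (A \<inter> Suc ` A) \<noteq> 0" using assms by (auto simp: prod_zero_iff)
  ultimately show ?thesis unfolding prod_dividef by simp
qed

text \<open>For \<open>P = set \<lambda>\<close> these are the sets \<open>{y\<^sub>j}\<close> and \<open>{x\<^sub>i}\<close> of outer and inner corner contents,
  see \<open>bij_betw_ycont\<close> and \<open>bij_betw_xcont\<close>.\<close>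

definition outer_corner_contents :: "nat set \<Rightarrow> nat set" where
  "outer_corner_contents P = P - Suc ` P"

definition inner_corner_contents :: "nat set \<Rightarrow> nat set" where
  "inner_corner_contents P = insert 1 (Suc ` P - P)"

definition choose2_diff :: "nat \<Rightarrow> nat \<Rightarrow> real" where
  "choose2_diff x v = (real x gchoose 2) - (real v gchoose 2)"

lemma choose2_diff_eq: "choose2_diff x v = (real x - real v) * (real x + real v - 1) / 2"
  unfolding choose2_diff_def by (simp add: gbinomial_prod_rev numeral_2_eq_2 field_simps)

lemma choose2_diff_eq_0_iff: "choose2_diff x v = 0 \<longleftrightarrow> v = x \<or> x + v = 1"
  unfolding choose2_diff_eq by auto

lemma hook_factor_ratio:
  assumes "q \<noteq> a" "q \<noteq> Suc a"
  shows "((real a + real q) / \<bar>real a - real q\<bar>) / ((real (Suc a) + real q) / \<bar>real (Suc a) - real q\<bar>)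
       = choose2_diff (Suc a) q / choose2_diff (Suc a) (Suc q)"
proof -
  define A Q where "A = real a" and "Q = real q"
  have "\<bar>A + 1 - Q\<bar> / \<bar>A - Q\<bar> = (A + 1 - Q) / (A - Q)"
    using assms by (auto simp: A_def Q_def abs_if divide_simps algebra_simps)
  moreover have "A - Q \<noteq> 0" "A + Q + 1 \<noteq> 0" using assms by (auto simp: A_def Q_def)
  moreover have "choose2_diff (Suc a) q = (A + 1 - Q) * (A + Q) / 2"
    and "choose2_diff (Suc a) (Suc q) = (A - Q) * (A + Q + 1) / 2"
    by (simp_all add: choose2_diff_eq A_def Q_def algebra_simps)
  ultimately show ?thesis unfolding A_def[symmetric] Q_def[symmetric] of_nat_Suc
    by (simp only:) (simp add: divide_simps add_ac)
qed

lemma hook_formula_add_part_telescope: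
  assumes "finite P" "0 \<notin> P" "a = 0 \<or> a \<in> P" "Suc a \<notin> P"
  defines "Q \<equiv> P - {a}"
  shows "hook_formula P / hook_formula (insert (Suc a) Q)
     = prod (choose2_diff (Suc a)) (Q - Suc ` Q) / prod (choose2_diff (Suc a)) (Suc ` Q - Q) / real (Suc a)"
proof -
  define g where "g = choose2_diff (Suc a)"
  define A where "A = (\<Prod>q\<in>Q. (real a + real q) / \<bar>real a - real q\<bar>)"
  define B where "B = (\<Prod>q\<in>Q. (real (Suc a) + real q) / \<bar>real (Suc a) - real q\<bar>)"
  have Q: "finite Q" "a \<notin> Q" "Suc a \<notin> Q" "0 \<notin> Q" using assms(1,2,4) by (auto simp: Q_def)
  have "hook_formula P = hook_formula (insert a Q)"
    using assms(3) Q(1) assms(2) by (auto simp: Q_def insert_absorb hook_formula_insert_0)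
  also have "\<dots> = fact a * A * hook_formula Q" unfolding A_def using Q(1,2) by (rule hook_formula_insert)
  finally have P: "hook_formula P = fact a * A * hook_formula Q" .
  have x: "hook_formula (insert (Suc a) Q) = fact (Suc a) * B * hook_formula Q"
    unfolding B_def using Q(1,3) by (rule hook_formula_insert)
  have "B \<noteq> 0" using Q unfolding B_def by (auto simp: prod_zero_iff simp del: of_nat_Suc)
  moreover have "0 < hook_formula Q" "fact (Suc a) = real (Suc a) * fact a" "(0::real) < fact a"
    using hook_formula_pos[OF Q(1)] by simp_all
  ultimately have "hook_formula P / hook_formula (insert (Suc a) Q) = A / B / real (Suc a)"
    unfolding P x by (simp del: of_nat_Suc fact_Suc)
  also have "A / B = (\<Prod>q\<in>Q. g q / g (Suc q))"
    unfolding A_def B_def g_def prod_dividef[symmetric] using Q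
    by (intro prod.cong[OF refl] hook_factor_ratio) auto
  also have "\<dots> = prod g (Q - Suc ` Q) / prod g (Suc ` Q - Q)"
    using Q by (intro prod_telescope) (auto simp: g_def choose2_diff_eq_0_iff)
  finally show ?thesis unfolding g_def .
qed

lemma hook_formula_add_part:
  assumes "finite P" "0 \<notin> P" "a = 0 \<or> a \<in> P" "Suc a \<notin> P"
  shows "hook_formula P / hook_formula (insert (Suc a) (P - {a}))
     = (if a = 0 then 1 else 1 / 2) *
       (prod (choose2_diff (Suc a)) (outer_corner_contents P)
        / prod (choose2_diff (Suc a)) (inner_corner_contents P - {Suc a}))"
proof (cases "a = 0")
  case True
  have "Suc ` P - P = inner_corner_contents P - {1}"
    using assms(2) by (auto simp: inner_corner_contents_def)
  then show ?thesis
    using hook_formula_add_part_telescope[OF assms] True assms(2)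
    by (simp add: outer_corner_contents_def)
next
  case False
  define g where "g = choose2_diff (Suc a)"
  define Q where "Q = P - {a}"
  define R where "R = prod g (Suc ` P - P - {Suc a})"
  have a: "a \<in> P" "0 < a" using assms(3) False by auto
  have fin: "finite (Suc ` P - P - {Suc a})" "finite (Suc ` Q - Q)" using assms(1) by (auto simp: Q_def)
  have "R \<noteq> 0" using fin(1) assms(2) by (auto simp: R_def g_def prod_zero_iff choose2_diff_eq_0_iff)
  moreover have "prod g (Suc ` Q - Q) \<noteq> 0"
    using fin(2) assms(2,4) by (auto simp: Q_def g_def prod_zero_iff choose2_diff_eq_0_iff)
  moreover have "prod g (Q - Suc ` Q) * (g a * R) = prod g (outer_corner_contents P) * prod g (Suc ` Q - Q)"
    unfolding R_def Q_def outer_corner_contents_def using assms(1) a(1) assms(4) by (rule prod_Diff_Suc_image_remove)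
  moreover have "prod g (inner_corner_contents P - {Suc a}) = g 1 * R"
  proof -
    have "inner_corner_contents P - {Suc a} = insert 1 (Suc ` P - P - {Suc a})"
      using a assms(2) by (auto simp: inner_corner_contents_def)
    moreover have "1 \<notin> Suc ` P - P - {Suc a}" using assms(2) by auto
    ultimately show ?thesis using fin(1) by (simp add: R_def)
  qed
  moreover have "g a = real a" "g 1 = real a * real (Suc a) / 2"
    by (simp_all add: g_def choose2_diff_eq field_simps)
  moreover have "g 1 \<noteq> 0" using a(2) by (simp add: g_def choose2_diff_eq_0_iff)
  ultimately have "prod g (Q - Suc ` Q) / prod g (Suc ` Q - Q) / real (Suc a)
      = 1 / 2 * (prod g (outer_corner_contents P) / prod g (inner_corner_contents P - {Suc a}))"
    using a(2) by (simp add: divide_simps del: of_nat_Suc) (simp add: mult_ac)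
  then show ?thesis
    using hook_formula_add_part_telescope[OF assms] False unfolding g_def Q_def by simp
qed

section \<open>Corners\<close>

definition corner_rows :: "nat list \<Rightarrow> nat set" where
  "corner_rows lam = {i. 1 \<le> i \<and> i \<le> length lam \<and> (i = length lam \<or> part lam (Suc i) + 1 < part lam i)}"

lemma finite_corner_rows [simp]: "finite (corner_rows lam)"
  by (rule finite_subset[of _ "{1..length lam}"]) (auto simp: corner_rows_def)

lemma corner_rowsD: "i \<in> corner_rows lam \<Longrightarrow> 1 \<le> i \<and> i \<le> length lam"
  by (simp add: corner_rows_def)

lemma zero_notin_corner_rows [simp]: "0 \<notin> corner_rows lam"
  by (simp add: corner_rows_def)

lemma length_in_corner_rows: "lam \<noteq> [] \<Longrightarrow> length lam \<in> corner_rows lam"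
  by (simp add: corner_rows_def Suc_le_eq)

lemma strict_partition_remove_corner:
  assumes strict: "strict_partition lam" and i: "i \<in> corner_rows lam"
  obtains mu where "strict_partition mu" "\<And>k. part mu k = part lam k - (if k = i then 1 else 0)"
proof (cases "part lam i = 1")
  case True
  have i1: "1 \<le> i" "i \<le> length lam" using corner_rowsD[OF i] by auto
  then have il: "i = length lam" using i True by (auto simp: corner_rows_def)
  define mu where "mu = butlast lam"
  have lam_eq: "lam = mu @ [last lam]" unfolding mu_def using i1 by (intro append_butlast_last_id[symmetric]) auto
  have "strict_partition mu" using strict_partition_snocD(1)[of mu "last lam"] strict lam_eq by simp
  moreover have "part mu k = part lam k - (if k = i then 1 else 0)" for k
  proof -
    have "part lam k = (if k = Suc (length mu) then last lam else part mu k)"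
      by (subst lam_eq) (rule part_snoc)
    moreover have "length lam = Suc (length mu)" by (subst lam_eq) simp
    ultimately show ?thesis using True il part_eq_0[of mu "Suc (length mu)"] by auto
  qed
  ultimately show thesis by (rule that)
next
  case False
  have i1: "1 \<le> i" "i \<le> length lam" using corner_rowsD[OF i] by auto
  then have two: "2 \<le> part lam i" using False strict_part_pos[OF strict i1] by auto
  define mu where "mu = lam[i - 1 := part lam i - 1]"
  have part_mu: "part mu k = part lam k - (if k = i then 1 else 0)" for k
    unfolding mu_def part_def using i1 by (auto simp: nth_list_update)
  have len: "length mu = length lam" by (simp add: mu_def)
  have "strict_partition mu"
    unfolding strict_partition_iff_part len
  proof (intro conjI allI impI)
    fix k assume "1 \<le> k \<and> k \<le> length lam"
    then show "0 < part mu k" using strict_part_pos[OF strict, of k] two by (auto simp: part_mu)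
  next
    fix k assume k: "1 \<le> k \<and> k < length lam"
    then have "part lam (Suc k) < part lam k" using strict_part_less[OF strict, of k "Suc k"] by simp
    moreover have "k = i \<Longrightarrow> part lam (Suc i) + 1 < part lam i" using i k by (auto simp: corner_rows_def)
    ultimately show "part mu (Suc k) < part mu k" by (auto simp: part_mu)
  qed
  then show thesis using part_mu by (rule that)
qed

lemma outer_cornerD:
  assumes strict: "strict_partition lam" and corner: "(r, c) \<in> outer_corners lam"
  shows "r \<in> corner_rows lam" "c = r + part lam r"
proof -
  from corner obtain mu where strict_mu: "strict_partition mu"
    and diagram_mu: "diagram mu = diagram lam - {(r, c)}" and "(r, c) \<in> diagram lam"
    unfolding outer_corners_def by auto
  then have add: "(r, c) \<notin> diagram mu" "diagram lam = diagram mu \<union> {(r, c)}" by auto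
  note part_lam = part_diagram_add_box[OF add]
  show "c = r + part lam r" using column_diagram_add_box[OF add] by (simp add: part_lam)
  have r: "1 \<le> r" "r \<le> length lam" using mem_diagram_rowD[OF \<open>(r, c) \<in> diagram lam\<close>] by auto
  show "r \<in> corner_rows lam"
  proof (rule ccontr)
    assume "r \<notin> corner_rows lam"
    then have r': "r < length lam" "part lam r \<le> part lam (Suc r) + 1"
      using r by (auto simp: corner_rows_def)
    then have "part lam (Suc r) < part lam r" using strict_part_less[OF strict, of r "Suc r"] r by auto
    then have "part mu r = part mu (Suc r)" using r' by (simp add: part_lam)
    moreover have "0 < part mu (Suc r)" using strict_part_pos[OF strict, of "Suc r"] r' by (simp add: part_lam)
    ultimately show False using strict_part_inj[OF strict_mu, of r "Suc r"] by simp
  qed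
qed

lemma corner_row_outer_corner:
  assumes strict: "strict_partition lam" and i: "i \<in> corner_rows lam"
  shows "(i, i + part lam i) \<in> outer_corners lam"
proof -
  have pos: "0 < part lam i" using strict_part_pos[OF strict] corner_rowsD[OF i] by auto
  obtain mu where "strict_partition mu" and part_mu: "\<And>k. part mu k = part lam k - (if k = i then 1 else 0)"
    using strict_partition_remove_corner[OF strict i] by blast
  moreover have "diagram mu = diagram lam - {(i, i + part lam i)}"
  proof (rule set_eqI)
    fix x :: "nat \<times> nat"
    obtain k j where "x = (k, j)" by force
    then show "x \<in> diagram mu \<longleftrightarrow> x \<in> diagram lam - {(i, i + part lam i)}"
      using part_mu pos by (cases "k = i") (auto simp: mem_diagram_iff)
  qed
  moreover have "(i, i + part lam i) \<in> diagram lam" using corner_rowsD[OF i] pos by (auto simp: mem_diagram_iff)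
  ultimately show ?thesis unfolding outer_corners_def by blast
qed

lemma outer_corners_eq:
  "strict_partition lam \<Longrightarrow> outer_corners lam = (\<lambda>i. (i, i + part lam i)) ` corner_rows lam"
  using outer_cornerD corner_row_outer_corner by fastforce

text \<open>The rows \<open>\<alpha>\<^sub>1 > \<dots> > \<alpha>\<^sub>m\<close> of the outer corners; after appending \<open>0\<close>,
  entry \<open>j\<close> is \<open>\<alpha>\<^sub>j\<^sub>+\<^sub>1\<close>.\<close>

definition corner_rows_desc :: "nat list \<Rightarrow> nat list" where
  "corner_rows_desc lam = rev (sorted_list_of_set (corner_rows lam))"

lemma set_corner_rows_desc [simp]: "set (corner_rows_desc lam) = corner_rows lam"
  by (simp add: corner_rows_desc_def)

lemma sorted_corner_rows_desc_0: "sorted_wrt (>) (corner_rows_desc lam @ [0])"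
  by (auto simp: corner_rows_desc_def sorted_wrt_append sorted_wrt_rev
      sorted_list_of_set.strict_sorted_key_list_of_set dest: corner_rowsD)

context
  fixes lam assumes strict: "strict_partition lam"
begin

lemma corner_list_eq: "corner_list lam = map (\<lambda>r. (r, r + part lam r)) (corner_rows_desc lam)"
proof -
  have "fst ` outer_corners lam = corner_rows lam"
    unfolding outer_corners_eq[OF strict] by (auto simp: image_image)
  moreover have "(THE c. (r, c) \<in> outer_corners lam) = r + part lam r" if "r \<in> corner_rows lam" for r
    unfolding outer_corners_eq[OF strict] using that by (rule_tac the_equality) auto
  ultimately show ?thesis
    unfolding corner_list_def corner_rows_desc_def by (auto intro: map_cong)
qed

lemma ncorners_eq: "ncorners lam = length (corner_rows_desc lam)"
  unfolding ncorners_def corner_list_eq by simp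

lemma alpha_Suc_eq: "j \<le> ncorners lam \<Longrightarrow> alpha lam (Suc j) = int ((corner_rows_desc lam @ [0]) ! j)"
  unfolding alpha_def ncorners_eq corner_list_eq by (auto simp: nth_append)

lemma beta_eq:
  "1 \<le> j \<Longrightarrow> j \<le> ncorners lam \<Longrightarrow>
    beta lam j = int (corner_rows_desc lam ! (j - 1) + part lam (corner_rows_desc lam ! (j - 1)))"
  unfolding beta_def ncorners_eq corner_list_eq by simp

lemma ycont_eq: "1 \<le> j \<Longrightarrow> j \<le> ncorners lam \<Longrightarrow> ycont lam j = int (part lam (corner_rows_desc lam ! (j - 1)))"
proof -
  assume j: "1 \<le> j" "j \<le> ncorners lam"
  then have "j - 1 < length (corner_rows_desc lam)" by (simp add: ncorners_eq)
  then show ?thesis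
    unfolding ycont_def using beta_eq[OF j] alpha_Suc_eq[of "j - 1"] j by (simp add: nth_append)
qed

lemma hd_corner_rows_desc_0: "(corner_rows_desc lam @ [0]) ! 0 = length lam"
proof (cases "length lam = 0")
  case False
  then have "length lam \<in> set (corner_rows_desc lam)" by (simp add: length_in_corner_rows)
  then obtain k where k: "k < length (corner_rows_desc lam)" "corner_rows_desc lam ! k = length lam"
    by (metis in_set_conv_nth)
  have "0 < length (corner_rows_desc lam)" using k by auto
  moreover have "corner_rows_desc lam ! 0 \<in> corner_rows lam"
    using nth_mem[OF calculation] by simp
  moreover have "corner_rows_desc lam ! k \<le> corner_rows_desc lam ! 0"
    using sorted_wrt_nth_less[OF sorted_corner_rows_desc_0[of lam], of 0 k] k by (cases k) (auto simp: nth_append split: if_splits)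
  ultimately show ?thesis using k corner_rowsD by (fastforce simp: nth_append)
next
  case True
  then have "corner_rows lam = {}" by (auto dest: corner_rowsD)
  then show ?thesis using True by (simp add: corner_rows_desc_def)
qed

text \<open>Between consecutive corner rows the parts drop by exactly one, so \<open>k + \<lambda>\<^sub>k\<close> is constant there.\<close>

lemma corner_rows_gap:
  assumes "u < v" "v \<in> corner_rows lam" "\<forall>w. u < w \<and> w < v \<longrightarrow> w \<notin> corner_rows lam"
  shows "v + part lam v = Suc u + part lam (Suc u)"
proof -
  have step: "k + part lam k = Suc k + part lam (Suc k)" if "u < k" "k < v" for k
  proof -
    have "1 \<le> k" "k < length lam" using that corner_rowsD[OF assms(2)] by linarith+
    then show ?thesis
      using assms(3) that strict_part_less[OF strict, of k "Suc k"] by (auto simp: corner_rows_def)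
  qed
  have "v - d + part lam (v - d) = v + part lam v" if "d \<le> v - Suc u" for d
    using that
  proof (induction d)
    case (Suc d)
    then have "Suc (v - Suc d) = v - d" using assms(1) by linarith
    then show ?case using step[of "v - Suc d"] Suc assms(1) by simp
  qed simp
  from this[of "v - Suc u"] show ?thesis using assms(1) by (simp add: Suc_diff_Suc)
qed

lemma xcont_eq:
  assumes "j \<le> ncorners lam"
  shows "xcont lam j = int (Suc (part lam (Suc ((corner_rows_desc lam @ [0]) ! j))))"
proof (cases j)
  case 0
  then show ?thesis
    using alpha_Suc_eq[of 0] hd_corner_rows_desc_0 by (simp add: xcont_def beta_def part_eq_0)
next
  case (Suc t)
  define zs where "zs = corner_rows_desc lam @ [0]"
  have t: "t < length (corner_rows_desc lam)" using assms Suc by (simp add: ncorners_eq)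
  then have v: "zs ! t \<in> corner_rows lam" using nth_mem[OF t] by (simp add: zs_def nth_append)
  have uv: "zs ! j < zs ! t"
    using sorted_wrt_nth_less[OF sorted_corner_rows_desc_0[of lam], of t j] t Suc by (simp add: zs_def)
  have "\<forall>w. zs ! j < w \<and> w < zs ! t \<longrightarrow> w \<notin> corner_rows lam"
  proof (intro allI impI notI)
    fix w assume w: "zs ! j < w \<and> w < zs ! t" "w \<in> corner_rows lam"
    then have "w \<in> set zs" by (simp add: zs_def)
    then obtain s where s: "s < length zs" "zs ! s = w" by (metis in_set_conv_nth)
    have "t < s" "s < j"
      using w s t Suc sorted_wrt_nth_less[OF sorted_corner_rows_desc_0[of lam], of s t]
        sorted_wrt_nth_less[OF sorted_corner_rows_desc_0[of lam], of j s]
      by (fastforce simp: zs_def intro: ccontr)+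
    then show False using Suc by simp
  qed
  then have "zs ! t + part lam (zs ! t) = Suc (zs ! j) + part lam (Suc (zs ! j))"
    using corner_rows_gap[OF uv v] by blast
  moreover have "beta lam j = int (zs ! t + part lam (zs ! t))"
    using beta_eq[of j] assms t Suc by (simp add: zs_def nth_append)
  ultimately show ?thesis
    using alpha_Suc_eq[OF assms] unfolding xcont_def zs_def by simp
qed

end

context
  fixes lam assumes strict: "strict_partition lam"
begin

lemma part_image_corner_rows: "part lam ` corner_rows lam = outer_corner_contents (set lam)"
proof (rule set_eqI, rule iffI)
  fix v assume "v \<in> part lam ` corner_rows lam"
  then obtain c where c: "c \<in> corner_rows lam" "v = part lam c" by auto
  have c1: "1 \<le> c" "c \<le> length lam" using corner_rowsD[OF c(1)] by auto
  have v: "v \<in> set lam" using c c1 strict_set_eq_parts[OF strict] by auto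
  have "v \<notin> Suc ` set lam"
  proof
    assume "v \<in> Suc ` set lam"
    then obtain k where k: "k \<in> {1..length lam}" "Suc (part lam k) = v"
      using strict_set_eq_parts[OF strict] by auto
    have "c < k"
      using strict_part_antimono[OF strict, of k c] k c1 c by (cases "c < k") auto
    then have "part lam (Suc c) + 1 < part lam c" using k c by (auto simp: corner_rows_def)
    moreover have "part lam k \<le> part lam (Suc c)"
      using strict_part_antimono[OF strict, of "Suc c" k] \<open>c < k\<close> k by auto
    ultimately show False using k c by auto
  qed
  then show "v \<in> outer_corner_contents (set lam)" using v by (simp add: outer_corner_contents_def)
next
  fix v assume "v \<in> outer_corner_contents (set lam)"
  then have v: "v \<in> set lam" "v \<notin> Suc ` set lam" by (auto simp: outer_corner_contents_def)
  then obtain k where k: "k \<in> {1..length lam}" "part lam k = v" using strict_set_eq_parts[OF strict] by auto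
  have "k \<in> corner_rows lam"
  proof (cases "k = length lam")
    case False
    then have "Suc k \<le> length lam" using k by auto
    then have "part lam (Suc k) < part lam k" "part lam (Suc k) \<in> set lam"
      using strict_part_less[OF strict, of k "Suc k"] strict_set_eq_parts[OF strict] k by auto
    then have "part lam (Suc k) + 1 < part lam k" using v k by (cases "part lam k = Suc (part lam (Suc k))") auto
    then show ?thesis using k by (auto simp: corner_rows_def)
  qed (use k in \<open>auto simp: corner_rows_def\<close>)
  then show "v \<in> part lam ` corner_rows lam" using k by auto
qed

lemma Suc_part_Suc_in_inner_corner_contents:
  assumes z: "z \<in> insert 0 (corner_rows lam)"
  shows "Suc (part lam (Suc z)) \<in> inner_corner_contents (set lam)"
proof (cases "part lam (Suc z) = 0")
  case False
  have zl: "z \<le> length lam" using z corner_rowsD by auto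
  have z1: "Suc z \<le> length lam" using False part_eq_0[of lam "Suc z"] by (cases "Suc z \<le> length lam") auto
  then have q: "part lam (Suc z) \<in> set lam" using strict_set_eq_parts[OF strict] by auto
  have "Suc (part lam (Suc z)) \<notin> set lam"
  proof
    assume "Suc (part lam (Suc z)) \<in> set lam"
    then obtain k where k: "k \<in> {1..length lam}" "part lam k = Suc (part lam (Suc z))"
      using strict_set_eq_parts[OF strict] by auto
    have "k \<le> z"
      using strict_part_antimono[OF strict, of "Suc z" k] k z by (cases "k \<le> z") auto
    then have "z \<in> corner_rows lam" using z k by auto
    then have "part lam (Suc z) + 1 < part lam z" using z1 by (auto simp: corner_rows_def)
    moreover have "part lam z \<le> part lam k" using strict_part_antimono[OF strict, of k z] k \<open>k \<le> z\<close> zl by auto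
    ultimately show False using k by auto
  qed
  then show ?thesis using q by (auto simp: inner_corner_contents_def)
qed (simp add: inner_corner_contents_def)

lemma inner_corner_contents_subset_image:
  "inner_corner_contents (set lam) \<subseteq> (\<lambda>z. Suc (part lam (Suc z))) ` insert 0 (corner_rows lam)"
proof
  fix v assume "v \<in> inner_corner_contents (set lam)"
  then consider "v = 1" | q where "q \<in> set lam" "Suc q \<notin> set lam" "v = Suc q"
    by (auto simp: inner_corner_contents_def)
  then show "v \<in> (\<lambda>z. Suc (part lam (Suc z))) ` insert 0 (corner_rows lam)"
  proof cases
    case 1
    have "length lam \<in> insert 0 (corner_rows lam)" using length_in_corner_rows[of lam] by auto
    moreover have "Suc (part lam (Suc (length lam))) = v" using 1 by (simp add: part_eq_0)
    ultimately show ?thesis by (metis image_eqI)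
  next
    case (2 q)
    then obtain t where t: "t \<in> {1..length lam}" "part lam t = q" using strict_set_eq_parts[OF strict] by auto
    have "t - 1 \<in> insert 0 (corner_rows lam)"
    proof (cases "t = 1")
      case False
      then have z: "1 \<le> t - 1" "t - 1 < length lam" "Suc (t - 1) = t" using t by auto
      have "part lam t < part lam (t - 1)" "part lam (t - 1) \<in> set lam"
        using strict_part_less[OF strict, of "t - 1" t] strict_set_eq_parts[OF strict] z t by auto
      then have "part lam (Suc (t - 1)) + 1 < part lam (t - 1)" using 2 t z
        by (cases "part lam (t - 1) = Suc q") auto
      then show ?thesis using z by (auto simp: corner_rows_def)
    qed simp
    moreover have "Suc (part lam (Suc (t - 1))) = v" using t 2 by simp
    ultimately show ?thesis by (metis image_eqI)
  qed
qed

lemma inner_image_corner_rows: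
  "(\<lambda>z. Suc (part lam (Suc z))) ` insert 0 (corner_rows lam) = inner_corner_contents (set lam)"
  using Suc_part_Suc_in_inner_corner_contents inner_corner_contents_subset_image by blast

lemma inj_on_inner_corner_content:
  "inj_on (\<lambda>z. Suc (part lam (Suc z))) (insert 0 (corner_rows lam))"
proof (rule inj_onI)
  fix z z' assume z: "z \<in> insert 0 (corner_rows lam)" "z' \<in> insert 0 (corner_rows lam)"
    and eq: "Suc (part lam (Suc z)) = Suc (part lam (Suc z'))"
  show "z = z'"
  proof (cases "0 < part lam (Suc z)")
    case True
    then show ?thesis using strict_part_inj[OF strict, of "Suc z" "Suc z'"] eq by simp
  next
    case False
    then have "\<not> Suc z \<le> length lam" "\<not> Suc z' \<le> length lam"
      using strict_part_pos[OF strict, of "Suc z"] strict_part_pos[OF strict, of "Suc z'"] eq by auto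
    moreover have "z \<le> length lam" "z' \<le> length lam" using z corner_rowsD[of _ lam] by auto
    ultimately show ?thesis by simp
  qed
qed

lemma xcont_0: "xcont lam 0 = 1"
  using xcont_eq[OF strict, of 0] hd_corner_rows_desc_0[OF strict] by (simp add: part_eq_0)

lemma bij_betw_ycont: "bij_betw (ycont lam) {1..ncorners lam} (int ` outer_corner_contents (set lam))"
proof -
  define ds where "ds = corner_rows_desc lam"
  have "bij_betw (\<lambda>j. j - 1) {1..length ds} {..<length ds}"
    by (rule bij_betw_byWitness[where f' = Suc]) auto
  moreover have "bij_betw ((!) ds) {..<length ds} (corner_rows lam)"
    by (rule bij_betw_nth) (simp_all add: ds_def corner_rows_desc_def)
  moreover have "bij_betw (\<lambda>r. int (part lam r)) (corner_rows lam) (int ` outer_corner_contents (set lam))"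
  proof (rule bij_betw_imageI)
    show "inj_on (\<lambda>r. int (part lam r)) (corner_rows lam)"
      using strict_part_inj[OF strict] strict_part_pos[OF strict] corner_rowsD
      by (auto simp: inj_on_def)
  qed (simp add: part_image_corner_rows[symmetric] image_image)
  ultimately have "bij_betw ((\<lambda>r. int (part lam r)) \<circ> (!) ds \<circ> (\<lambda>j. j - 1)) {1..length ds}
      (int ` outer_corner_contents (set lam))"
    by (intro bij_betw_trans)
  then show ?thesis
    unfolding ncorners_eq[OF strict] ds_def[symmetric]
    by (rule bij_betw_cong[THEN iffD1, rotated]) (simp add: ycont_eq[OF strict] ncorners_eq[OF strict] ds_def)
qed

lemma bij_betw_xcont: "bij_betw (xcont lam) {0..ncorners lam} (int ` inner_corner_contents (set lam))"
proof -
  define zs where "zs = corner_rows_desc lam @ [0]"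
  have "bij_betw ((!) zs) {0..ncorners lam} (insert 0 (corner_rows lam))"
    by (rule bij_betw_nth)
      (auto simp: zs_def ncorners_eq[OF strict] corner_rows_desc_def)
  moreover have "bij_betw (\<lambda>z. int (Suc (part lam (Suc z)))) (insert 0 (corner_rows lam))
      (int ` inner_corner_contents (set lam))"
  proof (rule bij_betw_imageI)
    show "inj_on (\<lambda>z. int (Suc (part lam (Suc z)))) (insert 0 (corner_rows lam))"
      using inj_on_inner_corner_content by (auto simp: inj_on_def)
  qed (simp add: inner_image_corner_rows[symmetric] image_image)
  ultimately have "bij_betw ((\<lambda>z. int (Suc (part lam (Suc z)))) \<circ> (!) zs) {0..ncorners lam}
      (int ` inner_corner_contents (set lam))"
    by (intro bij_betw_trans)
  then show ?thesis
    by (rule bij_betw_cong[THEN iffD1, rotated]) (simp add: xcont_eq[OF strict] zs_def)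
qed

lemma prod_ycont:
  "(\<Prod>j\<in>{1..ncorners lam}. f (ycont lam j)) = (\<Prod>v\<in>outer_corner_contents (set lam). f (int v))"
  using prod.reindex_bij_betw[OF bij_betw_ycont, of f] by (simp add: prod.reindex)

lemma prod_xcont_remove:
  assumes "i \<le> ncorners lam" "xcont lam i = int x"
  shows "(\<Prod>j\<in>{0..ncorners lam} - {i}. f (xcont lam j))
       = (\<Prod>v\<in>inner_corner_contents (set lam) - {x}. f (int v))"
proof -
  have "bij_betw (xcont lam) ({0..ncorners lam} - {i}) (int ` inner_corner_contents (set lam) - {int x})"
  proof (rule bij_betw_DiffI[OF bij_betw_xcont])
    show "int ` inner_corner_contents (set lam) \<supseteq> {int x}"
      using assms bij_betw_imp_surj_on[OF bij_betw_xcont] by force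
  qed (use assms in auto)
  moreover have "int ` inner_corner_contents (set lam) - {int x} = int ` (inner_corner_contents (set lam) - {x})"
    by auto
  ultimately show ?thesis using prod.reindex_bij_betw[of "xcont lam" _ _ f] by (simp add: prod.reindex)
qed

lemma xcont_eq_1_iff: "i \<le> ncorners lam \<Longrightarrow> xcont lam i = 1 \<longleftrightarrow> i = 0"
  using bij_betw_imp_inj_on[OF bij_betw_xcont] xcont_0 by (auto simp: inj_on_def)

end

theorem theorem3p1:
  fixes lam lamp :: "nat list" and i :: nat and b :: "nat \<times> nat"
  assumes "strict_partition lam"
    and "i \<le> ncorners lam"
    and "strict_partition lamp"
    and "b \<notin> diagram lam"
    and "diagram lamp = diagram lam \<union> {b}"
    and "content b = xcont lam i"
  shows "(i = 0 \<longrightarrow>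
           real (hook_product lam) / real (hook_product lamp) =
             (\<Prod>j\<in>{1..ncorners lam}.
                 (of_int (xcont lam 0) gchoose 2) - (of_int (ycont lam j) gchoose 2))
           / (\<Prod>j\<in>{1..ncorners lam}.
                 (of_int (xcont lam 0) gchoose 2) - (of_int (xcont lam j) gchoose 2)))
       \<and> (1 \<le> i \<longrightarrow>
           real (hook_product lam) / real (hook_product lamp) =
             1 / 2 * ((\<Prod>j\<in>{1..ncorners lam}.
                 (of_int (xcont lam i) gchoose 2) - (of_int (ycont lam j) gchoose 2))
           / (\<Prod>j\<in>{0..ncorners lam} - {i}.
                 (of_int (xcont lam i) gchoose 2) - (of_int (xcont lam j) gchoose 2))))"
proof -
  obtain a where content: "content b = int (Suc a)" and a: "a = 0 \<or> a \<in> set lam" "Suc a \<notin> set lam"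
    and parts': "set lamp = insert (Suc a) (set lam - {a})"
    using add_box[OF assms(1,3,4,5)] by blast
  have x: "xcont lam i = int (Suc a)" using assms(6) content by simp
  have i0: "i = 0 \<longleftrightarrow> a = 0" using xcont_eq_1_iff[OF assms(1,2)] x by simp
  have "0 \<notin> set lam" using assms(1) by (auto simp: strict_partition_def)
  then have ratio: "real (hook_product lam) / real (hook_product lamp) = (if a = 0 then 1 else 1 / 2) *
      (prod (choose2_diff (Suc a)) (outer_corner_contents (set lam))
       / prod (choose2_diff (Suc a)) (inner_corner_contents (set lam) - {Suc a}))"
    using hook_formula_add_part[OF finite_set _ a] parts'
    by (simp add: hook_product_eq_hook_formula assms(1,3))
  define f where "f z = (of_int (xcont lam i) gchoose 2) - (of_int z gchoose 2 :: real)" for z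
  have f: "f (int v) = choose2_diff (Suc a) v" for v by (simp add: f_def choose2_diff_def x)
  have outer: "(\<Prod>j\<in>{1..ncorners lam}. f (ycont lam j)) = prod (choose2_diff (Suc a)) (outer_corner_contents (set lam))"
    unfolding prod_ycont[OF assms(1)] f ..
  have inner: "(\<Prod>j\<in>{0..ncorners lam} - {i}. f (xcont lam j))
      = prod (choose2_diff (Suc a)) (inner_corner_contents (set lam) - {Suc a})"
    unfolding prod_xcont_remove[OF assms(1,2) x] f ..
  have "{1..ncorners lam} = {0..ncorners lam} - {0}" by auto
  then show ?thesis using ratio i0 outer inner unfolding f_def by (cases "i = 0") simp_all
qed

end
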